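(* For every integer $n$, \[ p(n) + \sum_{j\geq 1} (-1)^j \Big( p(n-j^2) + p(n-2j^2) \Big) = \begin{cases} 0 & \text{if } n \text{ is odd},\\ qq(n) & \text{if } n \text{ is even}, \end{cases} \] that is, $p(n) - p(n-1) - p(n-2) + p(n-4) + p(n-8) - p(n-9) - p(n-18) + p(n-16) + \cdots$ equals $0$ for odd $n$ and $qq(n)$ for even $n$.
   Context: $p(n)$ denotes the number of partitions of the integer $n$ (with $p(0)=1$ and $p(n)=0$ for $n<0$). $qq(n)$ denotes the number of partitions of $n$ into distinct odd parts (with $qq(n)=0$ for $n<0$). *)

theory Defs
  imports Main "HOL-Library.Multiset"
begin

definition p :: "int \<Rightarrow> int" where
  "p n = (if n < 0 then 0 else
     int (card {M :: nat multiset. (\<forall>x\<in>#M. 0 < x) \<and> sum_mset M = nat n}))"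

definition qq :: "int \<Rightarrow> int" where
  "qq n = (if n < 0 then 0 else
     int (card {S :: nat set. finite S \<and> (\<forall>x\<in>S. odd x) \<and> \<Sum>S = nat n}))"

end

theory Submission
  imports Defs "HOL-Computational_Algebra.Formal_Power_Series"
begin

(* Jacobi's triple product at z = -1 is Gauss's identity
     sum_{j in Z} (-1)^j q^(j^2) = (q;q^2)_oo^2 (q^2;q^2)_oo.
   Dividing by (q;q)_oo = (q;q^2)_oo (q^2;q^2)_oo gives (q;q^2)_oo, whose n-th coefficient is
   (-1)^n qq(n); the same identity for q^2, divided by (q;q)_oo, gives
   (q^2;q^4)_oo / (q;q^2)_oo = (-q;q^2)_oo, whose n-th coefficient is qq(n).  Since the
   coefficients of 1/(q;q)_oo are the p(n), adding the two coefficient identities yields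
   twice the left-hand side = ((-1)^n + 1) qq(n).
   Only finite objects are used: the finite triple product with Gaussian binomials
   replaces the infinite one, and all products are compared modulo X^(N+1), where they
   agree with their N-th partial products. *)

unbundle fps_syntax

section \<open>Gaussian binomials and the finite Jacobi triple product\<close>

definition qpoch :: "'a::comm_ring_1 \<Rightarrow> nat \<Rightarrow> 'a" where
  "qpoch q n = (\<Prod>k<n. 1 - q ^ Suc k)"

lemma qpoch_0 [simp]: "qpoch q 0 = 1"
  by (simp add: qpoch_def)

lemma qpoch_Suc: "qpoch q (Suc n) = qpoch q n * (1 - q ^ Suc n)"
  by (simp add: qpoch_def)

fun qbinom :: "'a::comm_ring_1 \<Rightarrow> nat \<Rightarrow> nat \<Rightarrow> 'a" where
  "qbinom q 0 b = 1"
| "qbinom q (Suc a) 0 = 1"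
| "qbinom q (Suc a) (Suc b) = qbinom q a (Suc b) + q ^ Suc a * qbinom q (Suc a) b"

lemma qbinom_0_right [simp]: "qbinom q a 0 = 1"
  by (cases a) auto

lemma qbinom_mult_qpoch: "qbinom q a b * qpoch q a * qpoch q b = qpoch q (a + b)"
proof (induction q a b rule: qbinom.induct)
  case (3 q a b)
  have "qbinom q (Suc a) (Suc b) * qpoch q (Suc a) * qpoch q (Suc b)
      = (qbinom q a (Suc b) * qpoch q a * qpoch q (Suc b)) * (1 - q ^ Suc a)
        + q ^ Suc a * (qbinom q (Suc a) b * qpoch q (Suc a) * qpoch q b) * (1 - q ^ Suc b)"
    by (simp add: qpoch_Suc algebra_simps)
  also have "\<dots> = qpoch q (a + Suc b) * (1 - q ^ Suc a) + q ^ Suc a * qpoch q (Suc a + b) * (1 - q ^ Suc b)"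
    using "3.IH" by simp
  also have "\<dots> = qpoch q (a + Suc b) * (1 - q ^ (Suc a + Suc b))"
    by (simp add: algebra_simps power_add)
  also have "\<dots> = qpoch q (Suc a + Suc b)"
    by (simp add: qpoch_Suc)
  finally show ?case .
qed simp_all

lemma qbinom_commute:
  fixes q :: "'a::idom"
  assumes "\<And>k. qpoch q k \<noteq> 0"
  shows "qbinom q a b = qbinom q b a"
proof -
  have "qbinom q a b * (qpoch q a * qpoch q b) = qbinom q b a * (qpoch q a * qpoch q b)"
    using qbinom_mult_qpoch[of q a b] qbinom_mult_qpoch[of q b a] by (simp add: algebra_simps)
  with assms show ?thesis
    by simp
qed

text \<open>The Gaussian binomial extended by zero to integer arguments, so that the
  Pascal recurrences below hold without side conditions on the range.\<close>

definition qbinom_int :: "'a::comm_ring_1 \<Rightarrow> int \<Rightarrow> int \<Rightarrow> 'a" where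
  "qbinom_int q a b = (if a < 0 \<or> b < 0 then 0 else qbinom q (nat a) (nat b))"

lemma qbinom_int_of_nat [simp]: "qbinom_int q (int a) (int b) = qbinom q a b"
  by (simp add: qbinom_int_def)

lemma qbinom_int_pascal:
  assumes "a \<noteq> 0 \<or> b \<noteq> 0"
  shows "qbinom_int q a b = qbinom_int q (a - 1) b + q ^ nat a * qbinom_int q a (b - 1)"
proof (cases "a < 0 \<or> b < 0")
  case True
  then show ?thesis
    by (auto simp: qbinom_int_def)
next
  case False
  then obtain a' b' where ab: "a = int a'" "b = int b'"
    by (metis nonneg_int_cases not_less)
  show ?thesis
  proof (cases a'; cases b')
    fix a'' b'' assume "a' = Suc a''" "b' = Suc b''"
    then have "nat (int a' - 1) = a''" "nat (int b' - 1) = b''"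
      by auto
    with ab \<open>a' = Suc a''\<close> \<open>b' = Suc b''\<close> show ?thesis
      by (simp add: qbinom_int_def nat_add_distrib)
  qed (use ab assms in \<open>auto simp: qbinom_int_def\<close>)
qed

lemma qbinom_int_commute:
  fixes q :: "'a::idom"
  assumes "\<And>k. qpoch q k \<noteq> 0"
  shows "qbinom_int q a b = qbinom_int q b a"
  unfolding qbinom_int_def using qbinom_commute[OF assms] by auto

lemma qbinom_int_pascal':
  fixes q :: "'a::idom"
  assumes "\<And>k. qpoch q k \<noteq> 0" "a \<noteq> 0 \<or> b \<noteq> 0"
  shows "qbinom_int q a b = qbinom_int q a (b - 1) + q ^ nat b * qbinom_int q (a - 1) b"
  using qbinom_int_pascal[of b a q] assms qbinom_int_commute[OF assms(1)] by auto

lemma qbinom_int_three_term: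
  fixes Q :: "'a::idom"
  assumes Q: "\<And>k. qpoch Q k \<noteq> 0" and ab: "a \<ge> -1" "b \<ge> -1" "a + b \<ge> 0"
  shows "qbinom_int Q (a + 1) (b + 1) = Q ^ nat (a + 1) * qbinom_int Q (a + 1) (b - 1)
           + (1 + Q ^ nat (a + b + 1)) * qbinom_int Q a b + Q ^ nat (b + 1) * qbinom_int Q (a - 1) (b + 1)"
proof -
  have pascal_left: "qbinom_int Q (a + 1) (b + 1) = qbinom_int Q a (b + 1) + Q ^ nat (a + 1) * qbinom_int Q (a + 1) b"
    using qbinom_int_pascal[of "a + 1" "b + 1" Q] ab by simp
  have pascal_right_1: "qbinom_int Q (a + 1) b = qbinom_int Q (a + 1) (b - 1) + Q ^ nat b * qbinom_int Q a b"
    using qbinom_int_pascal'[OF Q, of "a + 1" b] ab by simp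
  have pascal_right_2: "qbinom_int Q a (b + 1) = qbinom_int Q a b + Q ^ nat (b + 1) * qbinom_int Q (a - 1) (b + 1)"
    using qbinom_int_pascal'[OF Q, of a "b + 1"] ab by simp
  have powers: "Q ^ nat (a + 1) * (Q ^ nat b * qbinom_int Q a b) = Q ^ nat (a + b + 1) * qbinom_int Q a b"
  proof (cases "a < 0 \<or> b < 0")
    case True
    then show ?thesis
      by (auto simp: qbinom_int_def)
  next
    case False
    then have "nat (a + 1) + nat b = nat (a + b + 1)"
      by auto
    then show ?thesis
      by (simp add: power_add[symmetric] mult.assoc[symmetric])
  qed
  show ?thesis
    unfolding pascal_left pascal_right_1 pascal_right_2 using powers by (simp add: algebra_simps)
qed

definition jacobi_coeff :: "'a::comm_ring_1 \<Rightarrow> nat \<Rightarrow> int \<Rightarrow> 'a" where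
  "jacobi_coeff q n i = q ^ nat ((i - int n)\<^sup>2) * qbinom_int (q\<^sup>2) i (2 * int n - i)"

lemma jacobi_coeff_eq_0:
  "i < 0 \<or> 2 * int n < i \<Longrightarrow> jacobi_coeff q n i = 0"
  by (auto simp: jacobi_coeff_def qbinom_int_def)

lemma power_square_exponent_shift:
  fixes q :: "'a::monoid_mult"
  assumes "0 \<le> i"
  shows "q ^ (2 * n + 1) * q ^ nat ((i - int n)\<^sup>2) = q ^ nat ((i - int n - 1)\<^sup>2) * (q\<^sup>2) ^ nat i"
proof -
  have "int (nat ((i - int n)\<^sup>2)) = (i - int n)\<^sup>2" "int (nat ((i - int n - 1)\<^sup>2)) = (i - int n - 1)\<^sup>2"
    "int (nat i) = i"
    using assms by simp_all
  then have "int (2 * n + 1 + nat ((i - int n)\<^sup>2)) = int (nat ((i - int n - 1)\<^sup>2) + 2 * nat i)"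
    unfolding of_nat_add of_nat_mult by (simp add: power2_eq_square algebra_simps)
  then have "2 * n + 1 + nat ((i - int n)\<^sup>2) = nat ((i - int n - 1)\<^sup>2) + 2 * nat i"
    by (simp only: of_nat_eq_iff)
  then have "q ^ (2 * n + 1) * q ^ nat ((i - int n)\<^sup>2) = q ^ (nat ((i - int n - 1)\<^sup>2) + 2 * nat i)"
    by (simp only: power_add[symmetric])
  then show ?thesis
    by (simp only: power_add power_mult)
qed

lemma jacobi_coeff_Suc:
  fixes q :: "'a::idom"
  assumes Q: "\<And>k. qpoch (q\<^sup>2) k \<noteq> 0" and i: "0 \<le> i" "i \<le> 2 * int n + 2"
  defines "c \<equiv> q ^ (2 * n + 1)"
  shows "jacobi_coeff q (Suc n) i
           = c * jacobi_coeff q n i + (1 + c\<^sup>2) * jacobi_coeff q n (i - 1) + c * jacobi_coeff q n (i - 2)"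
proof -
  define a where "a = i - 1"
  define b where "b = 2 * int n + 1 - i"
  define E where "E = nat ((i - int n - 1)\<^sup>2)"
  have "c * jacobi_coeff q n i = q ^ E * ((q\<^sup>2) ^ nat (a + 1) * qbinom_int (q\<^sup>2) (a + 1) (b - 1))"
    using power_square_exponent_shift[of i q n] i
    by (simp add: c_def jacobi_coeff_def E_def a_def b_def algebra_simps)
  moreover have "c * jacobi_coeff q n (i - 2)
      = q ^ E * ((q\<^sup>2) ^ nat (b + 1) * qbinom_int (q\<^sup>2) (a - 1) (b + 1))"
  proof -
    have "(i - 2 - int n)\<^sup>2 = (b + 1 - int n)\<^sup>2" "(b + 1 - int n - 1)\<^sup>2 = (i - int n - 1)\<^sup>2"
      by (simp_all add: b_def power2_eq_square algebra_simps)
    then show ?thesis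
      using power_square_exponent_shift[of "b + 1" q n] i
      by (simp add: c_def jacobi_coeff_def E_def a_def b_def algebra_simps)
  qed
  moreover have "(1 + c\<^sup>2) * jacobi_coeff q n (i - 1) = q ^ E * ((1 + (q\<^sup>2) ^ nat (a + b + 1)) * qbinom_int (q\<^sup>2) a b)"
  proof -
    have "nat (a + b + 1) = 2 * n + 1"
      by (simp add: a_def b_def)
    then have "(q\<^sup>2) ^ nat (a + b + 1) = c\<^sup>2"
      unfolding c_def by (metis power_mult mult.commute)
    then show ?thesis
      by (simp add: jacobi_coeff_def E_def a_def b_def algebra_simps)
  qed
  moreover have "jacobi_coeff q (Suc n) i = q ^ E * qbinom_int (q\<^sup>2) (a + 1) (b + 1)"
    by (simp add: jacobi_coeff_def E_def a_def b_def algebra_simps)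
  ultimately show ?thesis
    using qbinom_int_three_term[OF Q, of a b] i by (simp add: a_def b_def algebra_simps)
qed

lemma sum_power_shift:
  fixes f :: "int \<Rightarrow> 'a::comm_semiring_1"
  assumes "\<And>i. i < 0 \<Longrightarrow> f i = 0" "\<And>i. int N \<le> i \<Longrightarrow> f i = 0" "N \<le> M"
  shows "(\<Sum>i<M + k. z ^ i * f (int i - int k)) = z ^ k * (\<Sum>i<N. z ^ i * f (int i))"
proof -
  have "(\<Sum>i<M + k. z ^ i * f (int i - int k))
      = (\<Sum>i<k. z ^ i * f (int i - int k)) + (\<Sum>i\<in>{k..<M + k}. z ^ i * f (int i - int k))"
    by (rule sum.atLeastLessThan_concat[of 0 k "M + k", unfolded atLeast0LessThan, symmetric]) simp_all
  also have "(\<Sum>i<k. z ^ i * f (int i - int k)) = 0"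
    using assms(1) by simp
  also have "(\<Sum>i\<in>{k..<M + k}. z ^ i * f (int i - int k)) = (\<Sum>i<M. z ^ (i + k) * f (int i))"
    using sum.shift_bounds_nat_ivl[of "\<lambda>i. z ^ i * f (int i - int k)" 0 k M] by (simp add: atLeast0LessThan)
  also have "\<dots> = z ^ k * (\<Sum>i<M. z ^ i * f (int i))"
    by (simp add: sum_distrib_left power_add algebra_simps)
  also have "(\<Sum>i<M. z ^ i * f (int i)) = (\<Sum>i<N. z ^ i * f (int i))"
    using assms(2,3) by (intro sum.mono_neutral_right) auto
  finally show ?thesis
    by simp
qed

lemma quadratic_times_power_sum:
  fixes f :: "int \<Rightarrow> 'a::comm_semiring_1"
  assumes "\<And>i. i < 0 \<Longrightarrow> f i = 0" "\<And>i. int N \<le> i \<Longrightarrow> f i = 0"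
  shows "(a + b * z + c * z\<^sup>2) * (\<Sum>i<N. z ^ i * f (int i))
       = (\<Sum>i<N + 2. z ^ i * (a * f (int i) + b * f (int i - 1) + c * f (int i - 2)))"
proof -
  have shift0: "(\<Sum>i<N + 2. z ^ i * f (int i)) = (\<Sum>i<N. z ^ i * f (int i))"
    using sum_power_shift[of f N "N + 2", where k = 0] assms by simp
  have shift1: "(\<Sum>i<N + 2. z ^ i * f (int i - 1)) = z * (\<Sum>i<N. z ^ i * f (int i))"
    using sum_power_shift[of f N "N + 1", where k = 1] assms by (simp add: add.assoc)
  have shift2: "(\<Sum>i<N + 2. z ^ i * f (int i - 2)) = z\<^sup>2 * (\<Sum>i<N. z ^ i * f (int i))"
    using sum_power_shift[of f N N, where k = 2] assms by simp
  have "(\<Sum>i<N + 2. z ^ i * (a * f (int i) + b * f (int i - 1) + c * f (int i - 2)))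
      = a * (\<Sum>i<N + 2. z ^ i * f (int i)) + b * (\<Sum>i<N + 2. z ^ i * f (int i - 1))
        + c * (\<Sum>i<N + 2. z ^ i * f (int i - 2))"
    by (simp add: sum.distrib sum_distrib_left ring_distribs mult.left_commute del: sum.lessThan_Suc)
  then show ?thesis
    unfolding shift0 shift1 shift2 by (simp add: algebra_simps)
qed

theorem finite_jacobi_triple_product:
  fixes q :: "'a::idom"
  assumes Q: "\<And>k. qpoch (q\<^sup>2) k \<noteq> 0"
  shows "(\<Prod>k<n. (1 + z * q ^ (2 * k + 1)) * (z + q ^ (2 * k + 1)))
       = (\<Sum>i<2 * n + 1. z ^ i * jacobi_coeff q n (int i))"
proof (induction n)
  case 0
  show ?case
    by (simp add: jacobi_coeff_def qbinom_int_def)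
next
  case (Suc n)
  define c where "c = q ^ (2 * n + 1)"
  have factor: "(1 + z * c) * (z + c) = c + (1 + c\<^sup>2) * z + c * z\<^sup>2"
    by (simp add: power2_eq_square algebra_simps)
  have "(\<Prod>k<Suc n. (1 + z * q ^ (2 * k + 1)) * (z + q ^ (2 * k + 1)))
      = (c + (1 + c\<^sup>2) * z + c * z\<^sup>2) * (\<Sum>i<2 * n + 1. z ^ i * jacobi_coeff q n (int i))"
    unfolding prod.lessThan_Suc Suc.IH c_def[symmetric] factor[symmetric] by (rule mult.commute)
  also have "\<dots> = (\<Sum>i<2 * n + 1 + 2. z ^ i * (c * jacobi_coeff q n (int i)
      + (1 + c\<^sup>2) * jacobi_coeff q n (int i - 1) + c * jacobi_coeff q n (int i - 2)))"
    by (rule quadratic_times_power_sum) (auto intro: jacobi_coeff_eq_0)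
  also have "\<dots> = (\<Sum>i<2 * Suc n + 1. z ^ i * jacobi_coeff q (Suc n) (int i))"
    by (rule sum.cong) (auto simp: c_def jacobi_coeff_Suc[OF Q])
  finally show ?case .
qed

section \<open>Congruences of power series modulo powers of X\<close>

definition fps_cong :: "nat \<Rightarrow> 'a::comm_ring_1 fps \<Rightarrow> 'a fps \<Rightarrow> bool" where
  "fps_cong k f g \<longleftrightarrow> fps_X ^ k dvd (f - g)"

lemma fps_cong_refl [simp]: "fps_cong k f f"
  by (simp add: fps_cong_def)

lemma fps_cong_sym: "fps_cong k f g \<Longrightarrow> fps_cong k g f"
  unfolding fps_cong_def by (metis dvd_minus_iff minus_diff_eq)

lemma fps_cong_trans: "fps_cong k f g \<Longrightarrow> fps_cong k g h \<Longrightarrow> fps_cong k f h"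
  unfolding fps_cong_def using dvd_add[of "fps_X ^ k" "f - g" "g - h"] by simp

lemma fps_cong_add: "fps_cong k f g \<Longrightarrow> fps_cong k f' g' \<Longrightarrow> fps_cong k (f + f') (g + g')"
  unfolding fps_cong_def using dvd_add[of "fps_X ^ k" "f - g" "f' - g'"] by (simp add: algebra_simps)

lemma fps_cong_mult: "fps_cong k f g \<Longrightarrow> fps_cong k f' g' \<Longrightarrow> fps_cong k (f * f') (g * g')"
proof -
  assume "fps_cong k f g" "fps_cong k f' g'"
  moreover have "f * f' - g * g' = (f - g) * f' + g * (f' - g')"
    by (simp add: algebra_simps)
  ultimately show ?thesis
    unfolding fps_cong_def by (simp add: dvd_add dvd_mult dvd_mult2)
qed

lemma fps_cong_sum:
  "(\<And>i. i \<in> A \<Longrightarrow> fps_cong k (f i) (g i)) \<Longrightarrow> fps_cong k (\<Sum>i\<in>A. f i) (\<Sum>i\<in>A. g i)"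
  by (induction A rule: infinite_finite_induct) (auto intro: fps_cong_add)

lemma fps_cong_mono: "fps_cong k f g \<Longrightarrow> k' \<le> k \<Longrightarrow> fps_cong k' f g"
  unfolding fps_cong_def by (meson dvd_trans le_imp_power_dvd)

lemma fps_cong_mult_X_power:
  "fps_cong k f g \<Longrightarrow> fps_cong (m + k) (fps_X ^ m * f) (fps_X ^ m * g)"
  unfolding fps_cong_def by (simp add: power_add right_diff_distrib[symmetric] mult_dvd_mono)

lemma fps_cong_nth: "fps_cong k f g \<Longrightarrow> i < k \<Longrightarrow> f $ i = g $ i"
proof -
  assume "fps_cong k f g" "i < k"
  then obtain h where "f - g = fps_X ^ k * h"
    unfolding fps_cong_def by (auto elim: dvdE)
  with \<open>i < k\<close> have "(f - g) $ i = 0"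
    by (simp add: fps_X_power_mult_nth)
  then show ?thesis
    by simp
qed

lemma fps_cong_inverse:
  fixes f g :: "'a::field fps"
  assumes "f $ 0 \<noteq> 0" "g $ 0 \<noteq> 0" "fps_cong k f g"
  shows "fps_cong k (inverse f) (inverse g)"
proof -
  have "inverse f - inverse g = inverse f * (g - f) * inverse g"
    using inverse_mult_eq_1[OF assms(1)] inverse_mult_eq_1'[OF assms(2)] by (simp add: algebra_simps)
  with fps_cong_sym[OF assms(3)] show ?thesis
    unfolding fps_cong_def by simp
qed

lemma fps_cong_mult_inverse:
  fixes f g h u :: "'a::field fps"
  assumes "fps_cong k f (g * h)" "fps_cong k u h" "h $ 0 \<noteq> 0" "u $ 0 \<noteq> 0"
  shows "fps_cong k (f * inverse u) g"
proof -
  have "fps_cong k (f * inverse u) (g * h * inverse h)"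
    using assms by (intro fps_cong_mult fps_cong_inverse) auto
  with assms(3) show ?thesis
    by (simp add: inverse_mult_eq_1' mult.assoc)
qed

lemma fps_cong_prod_tail:
  fixes n :: nat
  shows "N \<le> n \<Longrightarrow> (\<And>j. N \<le> j \<Longrightarrow> j < n \<Longrightarrow> fps_cong k (f j) 1)
    \<Longrightarrow> fps_cong k (\<Prod>j<n. f j) (\<Prod>j<N. f j)"
proof (induction n)
  case (Suc n)
  show ?case
  proof (cases "N = Suc n")
    case False
    with Suc.prems have "fps_cong k ((\<Prod>j<n. f j) * f n) ((\<Prod>j<N. f j) * 1)"
      by (intro fps_cong_mult Suc.IH) auto
    then show ?thesis
      by simp
  qed simp
qed simp

lemma fps_cong_one_plus_X_power:
  "k \<le> m \<Longrightarrow> fps_cong k (1 + c * fps_X ^ m) 1"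
  unfolding fps_cong_def by (simp add: le_imp_power_dvd)

lemma qpoch_X_power_nth_0:
  "e > 0 \<Longrightarrow> qpoch ((fps_X :: 'a::comm_ring_1 fps) ^ e) n $ 0 = 1"
  by (induction n) (simp_all add: qpoch_Suc power_mult[symmetric])

lemma qpoch_X_power_nonzero:
  "e > 0 \<Longrightarrow> qpoch ((fps_X :: 'a::comm_ring_1 fps) ^ e) n \<noteq> 0"
  using qpoch_X_power_nth_0[of e n] by (metis fps_zero_nth zero_neq_one)

lemma qpoch_X_power_cong:
  assumes "e > 0" "N \<le> a" "N \<le> b"
  shows "fps_cong (Suc N) (qpoch ((fps_X :: 'a::comm_ring_1 fps) ^ e) a) (qpoch (fps_X ^ e) b)"
proof -
  have tail: "fps_cong (Suc N) (qpoch ((fps_X :: 'a fps) ^ e) n) (qpoch (fps_X ^ e) N)" if "N \<le> n" for n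
    unfolding qpoch_def
  proof (rule fps_cong_prod_tail)
    fix j assume "N \<le> j"
    moreover have "Suc j \<le> e * Suc j"
      using assms(1) by (cases e) auto
    ultimately have "Suc N \<le> e * Suc j"
      by linarith
    then show "fps_cong (Suc N) (1 - (fps_X ^ e) ^ Suc j) 1"
      using fps_cong_one_plus_X_power[of "Suc N" "e * Suc j" "-1"] by (simp flip: power_mult power_add)
  qed (use that in simp)
  show ?thesis
    using tail[OF assms(2)] tail[OF assms(3)] by (meson fps_cong_sym fps_cong_trans)
qed

lemma inverse_qpoch_X_power_cong:
  assumes "e > 0" "N \<le> a" "N \<le> b"
  shows "fps_cong (Suc N) (inverse (qpoch ((fps_X :: 'a::field fps) ^ e) a)) (inverse (qpoch (fps_X ^ e) b))"
  using assms by (intro fps_cong_inverse qpoch_X_power_cong) (simp_all add: qpoch_X_power_nth_0)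

lemma qbinom_X_power_eq:
  assumes "e > 0"
  shows "qbinom ((fps_X :: 'a::field fps) ^ e) a b
       = qpoch (fps_X ^ e) (a + b) * inverse (qpoch (fps_X ^ e) a) * inverse (qpoch (fps_X ^ e) b)"
proof -
  let ?P = "qpoch ((fps_X :: 'a fps) ^ e)"
  have "?P (a + b) * inverse (?P a) * inverse (?P b)
      = qbinom (fps_X ^ e) a b * (?P a * inverse (?P a)) * (?P b * inverse (?P b))"
    unfolding qbinom_mult_qpoch[symmetric] by (simp add: mult_ac)
  also have "\<dots> = qbinom (fps_X ^ e) a b"
    using assms by (simp add: inverse_mult_eq_1' qpoch_X_power_nth_0)
  finally show ?thesis ..
qed

text \<open>Modulo \<open>X\<^bsup>m+1\<^esup>\<close> all the factors \<open>(X\<^sup>e; X\<^sup>e)\<^sub>k\<close> with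
  \<open>k \<ge> m\<close> agree, so the Gaussian binomial collapses to \<open>1 / (X\<^sup>e; X\<^sup>e)\<^sub>m\<close>.\<close>

lemma qbinom_X_power_cong:
  assumes e: "e > 0" and L: "min a b \<le> L"
  shows "fps_cong (Suc (min a b)) (qbinom ((fps_X :: 'a::field fps) ^ e) a b) (inverse (qpoch (fps_X ^ e) L))"
proof -
  let ?P = "qpoch ((fps_X :: 'a fps) ^ e)" and ?m = "min a b"
  have "fps_cong (Suc ?m) (qbinom (fps_X ^ e) a b) (?P ?m * inverse (?P ?m) * inverse (?P ?m))"
    unfolding qbinom_X_power_eq[OF e]
    by (intro fps_cong_mult qpoch_X_power_cong inverse_qpoch_X_power_cong e) auto
  also have "?P ?m * inverse (?P ?m) * inverse (?P ?m) = inverse (?P ?m)"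
    using e by (simp add: inverse_mult_eq_1' qpoch_X_power_nth_0)
  finally show ?thesis
    using inverse_qpoch_X_power_cong[OF e order_refl L] by (rule fps_cong_trans)
qed

section \<open>Gauss's identity modulo X^(N+1)\<close>

lemma sum_alternating_symmetric:
  fixes h :: "int \<Rightarrow> 'a::comm_ring_1"
  assumes even: "\<And>t. h (- t) = h t"
  shows "(\<Sum>i<2 * N + 1. (-1) ^ i * h (int i - int N)) = (-1) ^ N * (h 0 + 2 * (\<Sum>j = 1..N. (-1) ^ j * h (int j)))"
proof (induction N)
  case (Suc N)
  define g where "g i = (-1) ^ i * h (int i - int (Suc N))" for i
  have "(\<Sum>i<2 * Suc N + 1. g i) = g 0 + (\<Sum>i<2 * N + 1. g (Suc i)) + g (Suc (2 * N + 1))"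
  proof -
    have "2 * Suc N + 1 = Suc (Suc (2 * N + 1))"
      by simp
    then show ?thesis
      by (simp only: sum.lessThan_Suc_shift[of g "Suc (2 * N + 1)"] sum.lessThan_Suc[of "\<lambda>i. g (Suc i)"] add.assoc)
  qed
  also have "\<dots> = 2 * h (int (Suc N)) - (\<Sum>i<2 * N + 1. (-1) ^ i * h (int i - int N))"
    using even[of "int (Suc N)"] by (simp add: g_def sum_negf algebra_simps)
  finally show ?case
    unfolding g_def Suc.IH by (simp add: algebra_simps)
qed simp

text \<open>\<open>theta_trunc d N = \<Sum>\<^bsub>|j| \<le> N\<^esub> (-1)\<^sup>j X\<^bsup>d j\<^sup>2\<^esup>\<close>, a partial sum of the theta series
  \<open>\<theta>(-X\<^sup>d)\<close>.\<close>

definition theta_trunc :: "nat \<Rightarrow> nat \<Rightarrow> 'a::comm_ring_1 fps" where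
  "theta_trunc d N = 1 + 2 * (\<Sum>j = 1..N. (-1) ^ j * fps_X ^ (d * j\<^sup>2))"

lemma jacobi_coeff_X_power_cong:
  assumes d: "d > 0" and i: "i \<le> 2 * N"
  shows "fps_cong (Suc N) (jacobi_coeff ((fps_X :: 'a::field fps) ^ d) N (int i))
           (fps_X ^ (d * nat ((int i - int N)\<^sup>2)) * inverse (qpoch (fps_X ^ (2 * d)) N))"
proof -
  define t where "t = nat \<bar>int i - int N\<bar>"
  define m where "m = d * nat ((int i - int N)\<^sup>2)"
  have m: "m = d * t\<^sup>2"
    unfolding m_def t_def by (metis abs_ge_zero nat_power_eq power2_abs)
  have diff: "2 * int N - int i = int (2 * N - i)"
    using i by simp
  have coeff: "jacobi_coeff ((fps_X :: 'a fps) ^ d) N (int i) = fps_X ^ m * qbinom (fps_X ^ (2 * d)) i (2 * N - i)"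
    unfolding jacobi_coeff_def
    by (simp only: diff qbinom_int_of_nat m_def power_mult[symmetric] mult.commute[of d 2])
  have cong: "fps_cong (m + Suc (min i (2 * N - i))) (fps_X ^ m * qbinom (fps_X ^ (2 * d)) i (2 * N - i))
      (fps_X ^ m * inverse (qpoch ((fps_X :: 'a fps) ^ (2 * d)) N))"
    by (intro fps_cong_mult_X_power qbinom_X_power_cong) (use d in auto)
  have bound: "Suc N \<le> m + Suc (min i (2 * N - i))"
  proof -
    have "t \<le> d * t\<^sup>2"
      using d by (simp add: power2_eq_square)
    moreover have "min i (2 * N - i) + t = N"
      using i unfolding t_def by auto
    ultimately show ?thesis
      unfolding m by linarith
  qed
  show ?thesis
    using fps_cong_mono[OF cong bound] unfolding coeff m_def .
qed

lemma finite_jacobi_triple_product_minus_one: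
  assumes "d > 0"
  shows "(-1) ^ N * (\<Prod>k<N. 1 - fps_X ^ (d * (2 * k + 1)))\<^sup>2
       = (\<Sum>i<2 * N + 1. (-1) ^ i * jacobi_coeff ((fps_X :: 'a::idom fps) ^ d) N (int i))"
proof -
  define q where "q = (fps_X :: 'a fps) ^ d"
  have "q\<^sup>2 = fps_X ^ (2 * d)"
    unfolding q_def by (simp add: power_mult[symmetric] mult.commute)
  with assms have nonzero: "qpoch (q\<^sup>2) k \<noteq> 0" for k
    by (simp add: qpoch_X_power_nonzero)
  have "(\<Prod>k<N. (1 + (-1) * q ^ (2 * k + 1)) * (-1 + q ^ (2 * k + 1)))
      = (\<Prod>k<N. (-1) * (1 - fps_X ^ (d * (2 * k + 1)))\<^sup>2)"
  proof (rule prod.cong)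
    fix k
    have "(1 + (-1) * y) * (-1 + y) = (-1) * (1 - y)\<^sup>2" for y :: "'a fps"
      by (simp add: power2_eq_square algebra_simps)
    then show "(1 + (-1) * q ^ (2 * k + 1)) * (-1 + q ^ (2 * k + 1)) = (-1) * (1 - fps_X ^ (d * (2 * k + 1)))\<^sup>2"
      unfolding q_def power_mult .
  qed simp
  also have "\<dots> = (-1) ^ N * (\<Prod>k<N. 1 - fps_X ^ (d * (2 * k + 1)))\<^sup>2"
    by (simp only: prod.distrib prod_constant card_lessThan prod_power_distrib)
  finally have product: "(\<Prod>k<N. (1 + (-1) * q ^ (2 * k + 1)) * (-1 + q ^ (2 * k + 1)))
      = (-1) ^ N * (\<Prod>k<N. 1 - fps_X ^ (d * (2 * k + 1)))\<^sup>2" .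
  show ?thesis
    unfolding product[symmetric] q_def[symmetric] by (rule finite_jacobi_triple_product[OF nonzero])
qed

text \<open>Gauss's identity modulo \<open>X\<^bsup>N+1\<^esup>\<close>: the finite triple product at \<open>z = -1\<close>, \<open>q = X\<^sup>d\<close>,
  where each Gaussian binomial may be replaced by \<open>1 / (X\<^bsup>2d\<^esup>; X\<^bsup>2d\<^esup>)\<^sub>N\<close>.\<close>

lemma theta_trunc_cong:
  assumes d: "d > 0"
  shows "fps_cong (Suc N) (theta_trunc d N)
           ((\<Prod>k<N. 1 - fps_X ^ (d * (2 * k + 1)))\<^sup>2 * qpoch ((fps_X :: 'a::field fps) ^ (2 * d)) N)"
proof -
  define P where "P = (\<Prod>k<N. 1 - fps_X ^ (d * (2 * k + 1)) :: 'a fps)"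
  define Q where "Q = qpoch ((fps_X :: 'a fps) ^ (2 * d)) N"
  have "(-1) ^ N * P\<^sup>2 = (\<Sum>i<2 * N + 1. (-1) ^ i * jacobi_coeff (fps_X ^ d) N (int i))"
    unfolding P_def using d by (rule finite_jacobi_triple_product_minus_one)
  also have "fps_cong (Suc N) \<dots> (\<Sum>i<2 * N + 1. (-1) ^ i * (fps_X ^ (d * nat ((int i - int N)\<^sup>2)) * inverse Q))"
    unfolding Q_def by (intro fps_cong_sum fps_cong_mult fps_cong_refl jacobi_coeff_X_power_cong d) simp
  also have "\<dots> = (\<Sum>i<2 * N + 1. (-1) ^ i * fps_X ^ (d * nat ((int i - int N)\<^sup>2))) * inverse Q"
    by (simp only: sum_distrib_right mult.assoc)
  also have "(\<Sum>i<2 * N + 1. (-1) ^ i * fps_X ^ (d * nat ((int i - int N)\<^sup>2))) = (-1) ^ N * (theta_trunc d N :: 'a fps)"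
    using sum_alternating_symmetric[of "\<lambda>t. fps_X ^ (d * nat (t\<^sup>2)) :: 'a fps" N]
    by (simp add: theta_trunc_def flip: of_nat_power)
  finally have "fps_cong (Suc N) ((-1) ^ N * P\<^sup>2) ((-1) ^ N * theta_trunc d N * inverse Q)" .
  then have "fps_cong (Suc N) ((-1) ^ N * ((-1) ^ N * P\<^sup>2) * Q) ((-1) ^ N * ((-1) ^ N * theta_trunc d N * inverse Q) * Q)"
    by (rule fps_cong_mult[OF fps_cong_mult[OF fps_cong_refl] fps_cong_refl])
  moreover have "inverse Q * Q = 1"
    using d by (simp add: Q_def inverse_mult_eq_1 qpoch_X_power_nth_0)
  ultimately show ?thesis
    by (simp add: P_def Q_def fps_cong_sym mult_ac flip: power_add)
qed

lemma qpoch_double: "qpoch q (2 * n) = (\<Prod>k<n. 1 - q ^ (2 * k + 1)) * qpoch (q\<^sup>2) n"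
proof (induction n)
  case (Suc n)
  have square: "(q\<^sup>2) ^ Suc n = q ^ (2 * n + 2)"
    unfolding power_mult[symmetric] by simp
  have "qpoch q (2 * Suc n) = qpoch q (2 * n) * (1 - q ^ (2 * n + 1)) * (1 - q ^ (2 * n + 2))"
    by (simp add: qpoch_Suc)
  then show ?case
    unfolding Suc.IH prod.lessThan_Suc qpoch_Suc square by (simp only: mult_ac)
qed simp

definition odd_parts_prod :: "'a \<Rightarrow> nat \<Rightarrow> 'a::comm_ring_1 fps" where
  "odd_parts_prod c n = (\<Prod>k<n. 1 + fps_const c * fps_X ^ (2 * k + 1))"

lemma odd_parts_prod_nth_0: "odd_parts_prod c n $ 0 = 1"
  by (induction n) (simp_all add: odd_parts_prod_def)

lemma odd_parts_prod_minus_one: "odd_parts_prod (-1) n = (\<Prod>k<n. 1 - fps_X ^ (2 * k + 1))"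
  by (simp add: odd_parts_prod_def fps_const_neg[symmetric])

lemma qpoch_X_power_cong_odd_even:
  assumes "e > 0"
  shows "fps_cong (Suc N) (qpoch ((fps_X :: 'a::comm_ring_1 fps) ^ e) N)
           ((\<Prod>k<N. 1 - fps_X ^ (e * (2 * k + 1))) * qpoch (fps_X ^ (2 * e)) N)"
proof -
  have "((fps_X :: 'a fps) ^ e)\<^sup>2 = fps_X ^ (2 * e)"
    by (simp add: power_mult[symmetric] mult.commute)
  then have split: "qpoch ((fps_X :: 'a fps) ^ e) (2 * N)
      = (\<Prod>k<N. 1 - fps_X ^ (e * (2 * k + 1))) * qpoch (fps_X ^ (2 * e)) N"
    unfolding qpoch_double power_mult[symmetric] by (simp add: mult.commute)
  show ?thesis
    using qpoch_X_power_cong[OF assms, of N N "2 * N", where 'a = 'a] unfolding split by simp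
qed

lemma theta_1_div_qpoch_cong:
  "fps_cong (Suc N) (theta_trunc 1 N * inverse (qpoch fps_X N)) (odd_parts_prod (-1) N :: 'a::field fps)"
proof -
  define Pm where "Pm = (odd_parts_prod (-1) N :: 'a fps)"
  define Q where "Q = qpoch ((fps_X :: 'a fps) ^ 2) N"
  have "fps_cong (Suc N) (theta_trunc 1 N) (Pm * (Pm * Q))"
    using theta_trunc_cong[of 1 N] by (simp add: Pm_def Q_def odd_parts_prod_minus_one power2_eq_square mult.assoc)
  moreover have "fps_cong (Suc N) (qpoch fps_X N) (Pm * Q)"
    using qpoch_X_power_cong_odd_even[of 1 N] by (simp add: Pm_def Q_def odd_parts_prod_minus_one)
  moreover have "(Pm * Q) $ 0 \<noteq> 0" "qpoch (fps_X :: 'a fps) N $ 0 \<noteq> 0"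
    using qpoch_X_power_nth_0[of 1 N, where 'a = 'a] by (simp_all add: Pm_def Q_def odd_parts_prod_nth_0 qpoch_X_power_nth_0)
  ultimately show ?thesis
    unfolding Pm_def by (rule fps_cong_mult_inverse)
qed

lemma theta_2_div_qpoch_cong:
  "fps_cong (Suc N) (theta_trunc 2 N * inverse (qpoch fps_X N)) (odd_parts_prod 1 N :: 'a::field fps)"
proof -
  define Pm where "Pm = (odd_parts_prod (-1) N :: 'a fps)"
  define Pp where "Pp = (odd_parts_prod 1 N :: 'a fps)"
  define R where "R = (\<Prod>k<N. 1 - (fps_X :: 'a fps) ^ (2 * (2 * k + 1)))"
  define Q where "Q = qpoch ((fps_X :: 'a fps) ^ 4) N"
  have R: "R = Pm * Pp"
  proof -
    have "1 - (fps_X :: 'a fps) ^ (2 * (2 * k + 1)) = (1 - fps_X ^ (2 * k + 1)) * (1 + fps_const 1 * fps_X ^ (2 * k + 1))" for k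
      by (simp add: power_mult_distrib algebra_simps flip: power_add)
    then show ?thesis
      unfolding R_def Pm_def Pp_def odd_parts_prod_minus_one by (simp add: odd_parts_prod_def prod.distrib)
  qed
  have "fps_cong (Suc N) (theta_trunc 2 N) (R\<^sup>2 * Q)"
    using theta_trunc_cong[of 2 N] unfolding R_def Q_def by simp
  moreover have "R\<^sup>2 * Q = Pp * (Pm * R * Q)"
    unfolding R by (simp add: power2_eq_square mult_ac)
  ultimately have "fps_cong (Suc N) (theta_trunc 2 N) (Pp * (Pm * R * Q))"
    by simp
  moreover have "fps_cong (Suc N) (qpoch fps_X N) (Pm * R * Q)"
  proof -
    have "fps_cong (Suc N) (qpoch (fps_X :: 'a fps) N) (Pm * qpoch (fps_X ^ 2) N)"
      using qpoch_X_power_cong_odd_even[of 1 N] by (simp add: Pm_def odd_parts_prod_minus_one)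
    moreover have "fps_cong (Suc N) (qpoch ((fps_X :: 'a fps) ^ 2) N) (R * Q)"
      using qpoch_X_power_cong_odd_even[of 2 N] by (simp add: R_def Q_def)
    ultimately show ?thesis
      unfolding mult.assoc by (metis fps_cong_mult fps_cong_refl fps_cong_trans)
  qed
  moreover have "(Pm * R * Q) $ 0 \<noteq> 0" "qpoch (fps_X :: 'a fps) N $ 0 \<noteq> 0"
    using qpoch_X_power_nth_0[of 1 N, where 'a = 'a] by (simp_all add: R Pm_def Pp_def Q_def odd_parts_prod_nth_0 qpoch_X_power_nth_0)
  ultimately show ?thesis
    unfolding Pp_def by (rule fps_cong_mult_inverse)
qed

section \<open>Partitions and distinct odd parts\<close>

definition bounded_partitions :: "nat \<Rightarrow> nat \<Rightarrow> nat multiset set" where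
  "bounded_partitions L m = {M. set_mset M \<subseteq> {1..L} \<and> sum_mset M = m}"

lemma member_le_sum_mset: "(x::nat) \<in># M \<Longrightarrow> x \<le> sum_mset M"
  by (induction M) auto

lemma size_le_sum_mset: "(\<forall>x\<in>#M. 0 < (x::nat)) \<Longrightarrow> size M \<le> sum_mset M"
  by (induction M) auto

lemma finite_bounded_partitions: "finite (bounded_partitions L m)"
proof (rule finite_subset)
  show "bounded_partitions L m \<subseteq> (\<Union>s\<le>m. multisets_of_size {1..L} s)"
  proof
    fix M assume "M \<in> bounded_partitions L m"
    then have "set_mset M \<subseteq> {1..L}" "sum_mset M = m"
      by (simp_all add: bounded_partitions_def)
    moreover from this(1) have "size M \<le> sum_mset M"
      by (intro size_le_sum_mset) auto
    ultimately show "M \<in> (\<Union>s\<le>m. multisets_of_size {1..L} s)"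
      by (auto simp: multisets_of_size_def)
  qed
qed auto

lemma bounded_partitions_Suc:
  "bounded_partitions (Suc L) m = bounded_partitions L m \<union>
     (if Suc L \<le> m then add_mset (Suc L) ` bounded_partitions (Suc L) (m - Suc L) else {})"
  (is "?lhs = ?rhs")
proof
  show "?lhs \<subseteq> ?rhs"
  proof
    fix M assume M: "M \<in> ?lhs"
    show "M \<in> ?rhs"
    proof (cases "Suc L \<in># M")
      case True
      then obtain M' where "M = add_mset (Suc L) M'"
        by (metis mset_add)
      with M show ?thesis
        by (auto simp: bounded_partitions_def image_iff)
    next
      case False
      with M have "set_mset M \<subseteq> {1..L}"
        by (auto simp: bounded_partitions_def le_Suc_eq)
      with M show ?thesis
        by (simp add: bounded_partitions_def)
    qed
  qed
  show "?rhs \<subseteq> ?lhs"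
    by (auto simp: bounded_partitions_def split: if_splits)
qed

lemma card_bounded_partitions_Suc:
  "card (bounded_partitions (Suc L) m) = card (bounded_partitions L m)
     + (if Suc L \<le> m then card (bounded_partitions (Suc L) (m - Suc L)) else 0)"
proof -
  have "bounded_partitions L m \<inter> add_mset (Suc L) ` bounded_partitions (Suc L) k = {}" for k
    by (auto simp: bounded_partitions_def)
  then show ?thesis
    by (subst bounded_partitions_Suc) (simp add: card_Un_disjoint finite_bounded_partitions card_image inj_on_def)
qed

lemma bounded_partitions_generating_function:
  "Abs_fps (\<lambda>m. of_nat (card (bounded_partitions L m))) * qpoch fps_X L = (1 :: 'a::comm_ring_1 fps)"
proof (induction L)
  case 0
  have "bounded_partitions 0 m = (if m = 0 then {{#}} else {})" for m
    by (auto simp: bounded_partitions_def)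
  then show ?case
    by (intro fps_ext) simp
next
  case (Suc L)
  have "Abs_fps (\<lambda>m. of_nat (card (bounded_partitions (Suc L) m))) * (1 - fps_X ^ Suc L)
      = (Abs_fps (\<lambda>m. of_nat (card (bounded_partitions L m))) :: 'a fps)"
  proof (rule fps_ext)
    fix m
    show "(Abs_fps (\<lambda>m. of_nat (card (bounded_partitions (Suc L) m))) * (1 - fps_X ^ Suc L)) $ m
        = (Abs_fps (\<lambda>m. of_nat (card (bounded_partitions L m))) :: 'a fps) $ m"
      using card_bounded_partitions_Suc[of L m] by (simp add: right_diff_distrib fps_X_power_mult_right_nth del: power_Suc)
  qed
  then show ?case
    using Suc.IH by (metis qpoch_Suc mult.assoc mult.commute)
qed

lemma partitions_eq_bounded_partitions:
  "m \<le> L \<Longrightarrow> {M :: nat multiset. (\<forall>x\<in>#M. 0 < x) \<and> sum_mset M = m} = bounded_partitions L m"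
  unfolding bounded_partitions_def
  by (auto simp: Suc_le_eq intro: order_trans[OF member_le_sum_mset])

lemma inverse_qpoch_X_nth:
  assumes "m \<le> L"
  shows "inverse (qpoch fps_X L) $ m = (of_int (p (int m)) :: 'a::field)"
proof -
  have "qpoch (fps_X :: 'a fps) L $ 0 = 1"
    using qpoch_X_power_nth_0[of 1 L] by simp
  then have "inverse (qpoch fps_X L) = (Abs_fps (\<lambda>m. of_nat (card (bounded_partitions L m))) :: 'a fps)"
    using bounded_partitions_generating_function[of L] by (metis fps_inverse_unique mult.commute)
  then show ?thesis
    using assms by (simp add: p_def partitions_eq_bounded_partitions)
qed

lemma power_card_eq_power_sum_odd:
  fixes c :: "'a::comm_monoid_mult"
  assumes "c\<^sup>2 = 1" "\<forall>x\<in>S. odd x"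
  shows "c ^ card S = c ^ (\<Sum>S)"
proof -
  have "c ^ x = c" if "odd x" for x
    using that assms(1) by (auto elim!: oddE simp: power_add power_mult)
  then show ?thesis
    using assms(2) by (simp add: power_sum)
qed

lemma distinct_odd_partitions_eq:
  assumes "m \<le> 2 * n"
  shows "{S :: nat set. finite S \<and> (\<forall>x\<in>S. odd x) \<and> \<Sum>S = m} = {S \<in> Pow ((\<lambda>k. 2 * k + 1) ` {..<n}). \<Sum>S = m}"
proof (intro set_eqI iffI)
  fix S assume S: "S \<in> {S. finite S \<and> (\<forall>x\<in>S. odd x) \<and> \<Sum>S = m}"
  have "x \<in> (\<lambda>k. 2 * k + 1) ` {..<n}" if x: "x \<in> S" for x
  proof -
    from S x have "x \<le> m"
      using member_le_sum[of x S id] by auto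
    moreover obtain k where "x = 2 * k + 1"
      using S x by (auto elim!: oddE)
    ultimately show ?thesis
      using assms by auto
  qed
  with S show "S \<in> {S \<in> Pow ((\<lambda>k. 2 * k + 1) ` {..<n}). \<Sum>S = m}"
    by auto
qed (auto intro: finite_subset)

lemma odd_parts_prod_nth:
  assumes "m \<le> 2 * n" "c\<^sup>2 = 1"
  shows "odd_parts_prod c n $ m = c ^ m * of_int (qq (int m))"
proof -
  define A where "A = (\<lambda>k. 2 * k + 1) ` {..<n}"
  have "odd_parts_prod c n = (\<Prod>x\<in>A. fps_const c * fps_X ^ x + 1)"
    unfolding odd_parts_prod_def A_def by (subst prod.reindex) (auto simp: inj_on_def add.commute)
  also have "\<dots> = (\<Sum>S\<in>Pow A. fps_const (c ^ card S) * fps_X ^ (\<Sum>S))"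
    by (simp add: prod_add A_def prod.distrib power_sum)
  finally have "odd_parts_prod c n $ m = (\<Sum>S\<in>Pow A. if \<Sum>S = m then c ^ card S else 0)"
    by (auto simp: fps_sum_nth intro: sum.cong)
  also have "\<dots> = (\<Sum>S\<in>{S \<in> Pow A. \<Sum>S = m}. c ^ card S)"
    by (rule sum.inter_filter[symmetric]) (simp add: A_def)
  also have "\<dots> = (\<Sum>S\<in>{S \<in> Pow A. \<Sum>S = m}. c ^ m)"
  proof (intro sum.cong refl)
    fix S assume "S \<in> {S \<in> Pow A. \<Sum>S = m}"
    then have "\<forall>x\<in>S. odd x" "\<Sum>S = m"
      by (auto simp: A_def)
    then show "c ^ card S = c ^ m"
      using power_card_eq_power_sum_odd[OF assms(2)] by simp
  qed
  also have "{S \<in> Pow A. \<Sum>S = m} = {S. finite S \<and> (\<forall>x\<in>S. odd x) \<and> \<Sum>S = m}"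
    unfolding A_def using distinct_odd_partitions_eq[OF assms(1)] ..
  finally show ?thesis
    by (simp add: qq_def mult.commute)
qed

lemma X_power_mult_inverse_qpoch_nth:
  assumes "m \<le> L"
  shows "(fps_X ^ k * inverse (qpoch fps_X L)) $ m = (of_int (p (int m - int k)) :: 'a::field)"
proof (cases "m < k")
  case True
  then have "p (int m - int k) = 0"
    by (simp add: p_def)
  with True show ?thesis
    by (simp add: fps_X_power_mult_nth)
next
  case False
  then have "int m - int k = int (m - k)"
    by simp
  moreover have "inverse (qpoch fps_X L) $ (m - k) = (of_int (p (int (m - k))) :: 'a)"
    using assms by (intro inverse_qpoch_X_nth) simp
  ultimately show ?thesis
    using False by (simp add: fps_X_power_mult_nth)
qed

lemma fps_minus_one_power_mult_nth: "((-1) ^ j * f) $ m = (-1) ^ j * (f $ m :: 'a::comm_ring_1)"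
  by (induction j) simp_all

lemma theta_trunc_div_qpoch_nth:
  "(theta_trunc d m * inverse (qpoch fps_X m)) $ m
     = (of_int (p (int m) + 2 * (\<Sum>j = 1..m. (-1) ^ j * p (int m - int d * (int j)\<^sup>2))) :: 'a::field)"
proof -
  have "(theta_trunc d m * inverse (qpoch fps_X m)) $ m
      = (inverse (qpoch fps_X m) + 2 * (\<Sum>j = 1..m. (-1) ^ j * (fps_X ^ (d * j\<^sup>2) * inverse (qpoch (fps_X :: 'a fps) m)))) $ m"
    by (simp only: theta_trunc_def distrib_right mult_1_left mult.assoc sum_distrib_right)
  also have "\<dots> = of_int (p (int m))
      + 2 * (\<Sum>j = 1..m. (-1) ^ j * of_int (p (int m - int (d * j\<^sup>2))))"
    by (simp only: fps_add_nth fps_sum_nth numeral_fps_const fps_mult_left_const_nth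
        fps_minus_one_power_mult_nth X_power_mult_inverse_qpoch_nth[OF order_refl] inverse_qpoch_X_nth[OF order_refl])
  finally show ?thesis
    by simp
qed

lemma partition_alternating_squares:
  "p (int m) + 2 * (\<Sum>j = 1..m. (-1) ^ j * p (int m - (int j)\<^sup>2)) = (-1) ^ m * qq (int m)"
proof -
  have "(theta_trunc 1 m * inverse (qpoch fps_X m)) $ m = (odd_parts_prod (-1) m :: rat fps) $ m"
    by (rule fps_cong_nth[OF theta_1_div_qpoch_cong]) simp
  then have "(of_int (p (int m) + 2 * (\<Sum>j = 1..m. (-1) ^ j * p (int m - (int j)\<^sup>2))) :: rat)
      = of_int ((-1) ^ m * qq (int m))"
    by (simp add: theta_trunc_div_qpoch_nth odd_parts_prod_nth)
  then show ?thesis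
    by (simp only: of_int_eq_iff)
qed

lemma partition_alternating_double_squares:
  "p (int m) + 2 * (\<Sum>j = 1..m. (-1) ^ j * p (int m - 2 * (int j)\<^sup>2)) = qq (int m)"
proof -
  have "(theta_trunc 2 m * inverse (qpoch fps_X m)) $ m = (odd_parts_prod 1 m :: rat fps) $ m"
    by (rule fps_cong_nth[OF theta_2_div_qpoch_cong]) simp
  then have "(of_int (p (int m) + 2 * (\<Sum>j = 1..m. (-1) ^ j * p (int m - 2 * (int j)\<^sup>2))) :: rat)
      = of_int (qq (int m))"
    by (simp add: theta_trunc_div_qpoch_nth odd_parts_prod_nth)
  then show ?thesis
    by (simp only: of_int_eq_iff)
qed

theorem theorem1:
  fixes n :: int
  shows "p n + (\<Sum>j\<in>{1..nat n}. (-1) ^ j * (p (n - int j ^ 2) + p (n - 2 * int j ^ 2)))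
         = (if odd n then 0 else qq n)"
proof (cases "n < 0")
  case True
  then show ?thesis
    by (simp add: p_def qq_def)
next
  case False
  then obtain m where n: "n = int m"
    by (metis nonneg_int_cases not_less)
  have "2 * (p n + (\<Sum>j\<in>{1..nat n}. (-1) ^ j * (p (n - int j ^ 2) + p (n - 2 * int j ^ 2))))
      = (p (int m) + 2 * (\<Sum>j = 1..m. (-1) ^ j * p (int m - (int j)\<^sup>2)))
        + (p (int m) + 2 * (\<Sum>j = 1..m. (-1) ^ j * p (int m - 2 * (int j)\<^sup>2)))"
    by (simp add: n sum.distrib sum_distrib_left algebra_simps)
  also have "\<dots> = ((-1) ^ m + 1) * qq n"
    unfolding partition_alternating_squares partition_alternating_double_squares n by (simp add: algebra_simps)
  finally show ?thesis
    by (cases "even m") (auto simp: n)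
qed

end
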